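(* For all $\mu\in{\cal S}$, $$\langle{\cal F}_{\rm A}(\mu)\rangle=\langle\mu\rangle^2\qquad\text{and}\qquad\langle{\cal F}_{\rm b}(\mu)\rangle\leq2\langle\mu\rangle,$$ and consequently $$\langle{\cal F}(\mu)\rangle\leq4\langle\mu\rangle^2\qquad\text{and}\qquad\langle\widehat{\cal F}(\mu)\rangle\leq2\langle\mu\rangle^2.$$
   Context: **Spaces.** $S=\{0,1\}^{\mathbb N}$ with $\mathbb N=\{0,1,\dots\}$. ${\cal M}$ is the set of probability laws on $S$, and ${\cal S}\subset{\cal M}$ the shift-invariant (stationary) laws. For $\mu\in{\cal S}$, $\langle\mu\rangle:=\int\mu(dy)\,y(i)$, which does not depend on $i$. **Column maps.** $\Phi_{\rm A}(y,z)(k)=y(k)\wedge z(k)$ and $\Phi_{\rm b}(y)(k)=y(k)\vee y(k+1)$. ${\cal F}_{\rm A}(\mu)$ is the law of $\Phi_{\rm A}(Y,Z)$ and ${\cal F}_{\rm b}(\mu)$ the law of $\Phi_{\rm b}(Y)$, with $Y,Z$ independent of law $\mu$. ${\cal F}={\cal F}_{\rm A}\circ{\cal F}_{\rm b}$ and $\widehat{\cal F}={\cal F}_{\rm b}\circ{\cal F}_{\rm A}$; these maps send ${\cal S}$ into ${\cal S}$. *)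

theory Defs
  imports "HOL-Probability.Probability"
begin

definition SM :: "(nat \<Rightarrow> bool) measure" where
  "SM = Pi\<^sub>M UNIV (\<lambda>_. count_space (UNIV :: bool set))"

definition is_law :: "(nat \<Rightarrow> bool) measure \<Rightarrow> bool" where
  "is_law \<mu> \<longleftrightarrow> prob_space \<mu> \<and> sets \<mu> = sets SM"

definition shift :: "(nat \<Rightarrow> bool) \<Rightarrow> (nat \<Rightarrow> bool)" where
  "shift y = (\<lambda>k. y (Suc k))"

text \<open>Shift-invariant (stationary) laws (the set S).\<close>
definition stationary :: "(nat \<Rightarrow> bool) measure \<Rightarrow> bool" where
  "stationary \<mu> \<longleftrightarrow> is_law \<mu> \<and> distr \<mu> SM shift = \<mu>"

text \<open>Density <mu> = integral of y(i); we take i = 0.\<close>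
definition dens :: "(nat \<Rightarrow> bool) measure \<Rightarrow> real" where
  "dens \<mu> = (\<integral>y. (if y 0 then 1 else 0) \<partial>\<mu>)"

definition PhiA :: "(nat \<Rightarrow> bool) \<Rightarrow> (nat \<Rightarrow> bool) \<Rightarrow> (nat \<Rightarrow> bool)" where
  "PhiA y z = (\<lambda>k. y k \<and> z k)"

definition Phib :: "(nat \<Rightarrow> bool) \<Rightarrow> (nat \<Rightarrow> bool)" where
  "Phib y = (\<lambda>k. y k \<or> y (Suc k))"

definition FA :: "(nat \<Rightarrow> bool) measure \<Rightarrow> (nat \<Rightarrow> bool) measure" where
  "FA \<mu> = distr (\<mu> \<Otimes>\<^sub>M \<mu>) SM (\<lambda>(y, z). PhiA y z)"

definition Fb :: "(nat \<Rightarrow> bool) measure \<Rightarrow> (nat \<Rightarrow> bool) measure" where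
  "Fb \<mu> = distr \<mu> SM Phib"

definition F :: "(nat \<Rightarrow> bool) measure \<Rightarrow> (nat \<Rightarrow> bool) measure" where
  "F = FA \<circ> Fb"

definition Fhat :: "(nat \<Rightarrow> bool) measure \<Rightarrow> (nat \<Rightarrow> bool) measure" where
  "Fhat = Fb \<circ> FA"

end

theory Submission
  imports Defs
begin

text \<open>Only one-site marginals enter. By independence, site \<open>k\<close> of \<open>FA \<nu>\<close> is occupied with
  probability \<open>P(Y k)\<^sup>2\<close>; by the union bound, site \<open>k\<close> of \<open>Fb \<nu>\<close> is occupied with probability
  at most \<open>P(Y k) + P(Y (k+1))\<close>, and stationarity makes both summands equal to \<open>\<langle>\<mu>\<rangle>\<close>.
  For \<open>Fhat \<mu> = Fb (FA \<mu>)\<close> the union bound only needs sites 0 and 1 of \<open>FA \<mu>\<close>, each of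
  probability \<open>\<langle>\<mu>\<rangle>\<^sup>2\<close>.\<close>

definition site_prob :: "(nat \<Rightarrow> bool) measure \<Rightarrow> nat \<Rightarrow> real" where
  "site_prob \<nu> k = measure \<nu> {y. y k}"

lemma site_prob_nonneg: "site_prob \<nu> k \<ge> 0"
  unfolding site_prob_def by simp

lemma space_SM: "space SM = UNIV"
  unfolding SM_def by (simp add: space_PiM)

lemma sets_SM_site: "{y. y k} \<in> sets SM"
proof -
  have "{y \<in> space SM. y k} \<in> sets SM"
    unfolding SM_def by measurable
  then show ?thesis
    by (simp add: space_SM)
qed

lemma measurable_Phib: "Phib \<in> SM \<rightarrow>\<^sub>M SM"
  unfolding SM_def Phib_def by (rule measurable_PiM_single') (auto simp: space_PiM)

lemma measurable_shift: "shift \<in> SM \<rightarrow>\<^sub>M SM"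
  unfolding SM_def shift_def by (rule measurable_PiM_single') (auto simp: space_PiM)

lemma measurable_PhiA: "(\<lambda>(y, z). PhiA y z) \<in> SM \<Otimes>\<^sub>M SM \<rightarrow>\<^sub>M SM"
proof -
  have "(\<lambda>p. PhiA (fst p) (snd p)) \<in> SM \<Otimes>\<^sub>M SM \<rightarrow>\<^sub>M SM"
    unfolding SM_def PhiA_def by (rule measurable_PiM_single') (auto simp: space_PiM)
  then show ?thesis
    by (simp add: case_prod_beta')
qed

lemma is_law_space: "is_law \<nu> \<Longrightarrow> space \<nu> = UNIV"
  unfolding is_law_def using sets_eq_imp_space_eq space_SM by metis

lemma is_law_sets_site: "is_law \<nu> \<Longrightarrow> {y. y k} \<in> sets \<nu>"
  unfolding is_law_def using sets_SM_site by simp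

lemma is_law_measurable: "is_law \<nu> \<Longrightarrow> f \<in> SM \<rightarrow>\<^sub>M N \<Longrightarrow> f \<in> \<nu> \<rightarrow>\<^sub>M N"
  unfolding is_law_def using measurable_cong_sets by blast

lemma dens_eq_site_prob:
  assumes "is_law \<nu>"
  shows "dens \<nu> = site_prob \<nu> 0"
proof -
  have indicator: "(\<lambda>y. if y 0 then 1 else 0 :: real) = indicator {y. y 0}"
    by (auto simp: indicator_def)
  show ?thesis
    unfolding dens_def site_prob_def indicator by (simp add: is_law_space[OF assms])
qed

lemma is_law_distr:
  assumes "is_law \<nu>" and "f \<in> SM \<rightarrow>\<^sub>M SM"
  shows "is_law (distr \<nu> SM f)"
proof -
  interpret prob_space \<nu>
    using assms(1) unfolding is_law_def by simp
  show ?thesis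
    unfolding is_law_def using prob_space_distr is_law_measurable[OF assms] by simp
qed

lemma site_prob_distr:
  assumes "is_law \<nu>" and "f \<in> SM \<rightarrow>\<^sub>M SM"
  shows "site_prob (distr \<nu> SM f) k = measure \<nu> {y. f y k}"
proof -
  have "f -` {y. y k} \<inter> space \<nu> = {y. f y k}"
    by (auto simp: is_law_space[OF assms(1)])
  then show ?thesis
    unfolding site_prob_def
    using measure_distr[OF is_law_measurable[OF assms] sets_SM_site] by simp
qed

lemma is_law_Fb: "is_law \<nu> \<Longrightarrow> is_law (Fb \<nu>)"
  unfolding Fb_def using is_law_distr measurable_Phib by blast

lemma site_prob_Fb_le:
  assumes "is_law \<nu>"
  shows "site_prob (Fb \<nu>) k \<le> site_prob \<nu> k + site_prob \<nu> (Suc k)"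
proof -
  have "site_prob (Fb \<nu>) k = measure \<nu> ({y. y k} \<union> {y. y (Suc k)})"
    unfolding Fb_def site_prob_distr[OF assms measurable_Phib]
    by (simp add: Phib_def Collect_disj_eq)
  also have "\<dots> \<le> site_prob \<nu> k + site_prob \<nu> (Suc k)"
    unfolding site_prob_def
    using measure_Un_le is_law_sets_site[OF assms] by blast
  finally show ?thesis .
qed

lemma is_law_FA_site_prob_FA:
  assumes "is_law \<nu>"
  shows "is_law (FA \<nu>)" and "site_prob (FA \<nu>) k = (site_prob \<nu> k)\<^sup>2"
proof -
  interpret prob_space \<nu>
    using assms unfolding is_law_def by simp
  interpret P: pair_prob_space \<nu> \<nu>
    by unfold_locales
  have "sets (\<nu> \<Otimes>\<^sub>M \<nu>) = sets (SM \<Otimes>\<^sub>M SM)"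
    using assms unfolding is_law_def by (intro sets_pair_measure_cong) auto
  then have meas: "(\<lambda>(y, z). PhiA y z) \<in> \<nu> \<Otimes>\<^sub>M \<nu> \<rightarrow>\<^sub>M SM"
    using measurable_PhiA measurable_cong_sets by blast
  show "is_law (FA \<nu>)"
    unfolding is_law_def FA_def using P.prob_space_distr[OF meas] by simp
  have "(\<lambda>(y, z). PhiA y z) -` {y. y k} \<inter> space (\<nu> \<Otimes>\<^sub>M \<nu>) = {y. y k} \<times> {y. y k}"
    by (auto simp: PhiA_def space_pair_measure is_law_space[OF assms])
  then have "site_prob (FA \<nu>) k = measure (\<nu> \<Otimes>\<^sub>M \<nu>) ({y. y k} \<times> {y. y k})"
    unfolding site_prob_def FA_def using measure_distr[OF meas sets_SM_site] by simp
  also have "\<dots> = (site_prob \<nu> k)\<^sup>2"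
    unfolding site_prob_def
    using emeasure_pair_measure_Times[OF is_law_sets_site[OF assms] is_law_sets_site[OF assms]]
    by (simp add: measure_def enn2real_mult power2_eq_square)
  finally show "site_prob (FA \<nu>) k = (site_prob \<nu> k)\<^sup>2" .
qed

lemma dens_FA: "is_law \<nu> \<Longrightarrow> dens (FA \<nu>) = (dens \<nu>)\<^sup>2"
  using is_law_FA_site_prob_FA dens_eq_site_prob by metis

lemma site_prob_Suc_stationary:
  assumes "stationary \<mu>"
  shows "site_prob \<mu> (Suc k) = site_prob \<mu> k"
proof -
  have "is_law \<mu>" and "distr \<mu> SM shift = \<mu>"
    using assms unfolding stationary_def by simp_all
  then show ?thesis
    using site_prob_distr[OF \<open>is_law \<mu>\<close> measurable_shift, of k] by (simp add: shift_def site_prob_def)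
qed

theorem lemma18:
  assumes "stationary \<mu>"
  shows "dens (FA \<mu>) = (dens \<mu>)\<^sup>2 \<and> dens (Fb \<mu>) \<le> 2 * dens \<mu>
       \<and> dens (F \<mu>) \<le> 4 * (dens \<mu>)\<^sup>2 \<and> dens (Fhat \<mu>) \<le> 2 * (dens \<mu>)\<^sup>2"
proof -
  have law: "is_law \<mu>"
    using assms unfolding stationary_def by simp
  have site_1: "site_prob \<mu> 1 = dens \<mu>"
    using site_prob_Suc_stationary[OF assms, of 0] dens_eq_site_prob[OF law] by simp
  have FA: "dens (FA \<mu>) = (dens \<mu>)\<^sup>2"
    using dens_FA[OF law] .
  have Fb: "dens (Fb \<mu>) \<le> 2 * dens \<mu>"
    using site_prob_Fb_le[OF law, of 0] site_1 dens_eq_site_prob law is_law_Fb by simp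
  have "dens (F \<mu>) = (dens (Fb \<mu>))\<^sup>2"
    unfolding F_def using dens_FA[OF is_law_Fb[OF law]] by simp
  also have "\<dots> \<le> (2 * dens \<mu>)\<^sup>2"
    using Fb dens_eq_site_prob[OF is_law_Fb[OF law]] site_prob_nonneg by (intro power_mono) auto
  finally have F: "dens (F \<mu>) \<le> 4 * (dens \<mu>)\<^sup>2"
    by (simp add: power_mult_distrib)
  have law_FA: "is_law (FA \<mu>)"
    using is_law_FA_site_prob_FA(1)[OF law] .
  have "dens (Fhat \<mu>) \<le> site_prob (FA \<mu>) 0 + site_prob (FA \<mu>) 1"
    unfolding Fhat_def using site_prob_Fb_le[OF law_FA, of 0] dens_eq_site_prob is_law_Fb[OF law_FA]
    by simp
  also have "\<dots> = 2 * (dens \<mu>)\<^sup>2"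
    using is_law_FA_site_prob_FA(2)[OF law] site_1 dens_eq_site_prob[OF law] by simp
  finally have Fhat: "dens (Fhat \<mu>) \<le> 2 * (dens \<mu>)\<^sup>2" .
  show ?thesis
    using FA Fb F Fhat by blast
qed

end
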